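(* Fix $\beta\in\mathcal{F}$ with $|\beta|_\mathfrak{p}>1$. Then for Haar-almost every $x\in\mathcal{F}$, the sequence $([\beta^n x])_{n\ge1}$ is uniformly distributed in $\mathcal{O}$.
   Context: $\mathcal{F}$ is a non-Archimedean local field with valuation ring $\mathcal{O}$, maximal ideal $\mathfrak{p}$, $q=\#\mathcal{O}/\mathfrak{p}$, normalized absolute value $|\cdot|_\mathfrak{p}$ and prime element $\pi$. Fix representatives $C\subset\mathcal{O}$ of $\mathcal{O}/\mathfrak{p}$ with $0\in C$; writing $x=\sum_{n\ge v}c_n\pi^n$ ($c_n\in C$), the integral part is $[x]=\sum_{n\ge0}c_n\pi^n$. $D(a,r)=\{x:|x-a|_\mathfrak{p}\le r\}$. A sequence $(x_n)\subset\mathcal{O}$ is uniformly distributed in $\mathcal{O}$ if for all $a\in\mathcal{O}$, $k\in\mathbb{N}$, $\frac1N\#\{1\le n\le N:x_n\in D(a,q^{-k})\}\to q^{-k}$. *)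

theory Defs
  imports "HOL-Probability.Probability"
begin

text \<open>A non-Archimedean local field is encoded abstractly: a field 'a carrying an
absolute value av, complete, discretely valued with value group q^Z,
with prime element prm (av prm = 1/q, normalized), and a set C of
representatives of the residue field O/p (which has q elements), 0 in C.\<close>

definition val_ring :: "('a \<Rightarrow> real) \<Rightarrow> 'a set" where
  "val_ring av = {x. av x \<le> 1}"

definition disc :: "('a::ab_group_add \<Rightarrow> real) \<Rightarrow> 'a \<Rightarrow> real \<Rightarrow> 'a set" where
  "disc av a r = {x. av (x - a) \<le> r}"

definition nonarch_local_field ::
  "('a::field \<Rightarrow> real) \<Rightarrow> nat \<Rightarrow> 'a \<Rightarrow> 'a set \<Rightarrow> bool" where
  "nonarch_local_field av q prm C \<longleftrightarrow>
     (\<forall>x. av x \<ge> 0) \<and> (\<forall>x. av x = 0 \<longleftrightarrow> x = 0) \<and>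
     (\<forall>x y. av (x * y) = av x * av y) \<and>
     (\<forall>x y. av (x + y) \<le> max (av x) (av y)) \<and>
     (\<forall>x. x \<noteq> 0 \<longrightarrow> (\<exists>k::int. av x = real q powr real_of_int k)) \<and>
     av prm = 1 / real q \<and>
     (\<forall>X::nat \<Rightarrow> 'a. (\<forall>e>0. \<exists>N. \<forall>m\<ge>N. \<forall>n\<ge>N. av (X m - X n) < e)
         \<longrightarrow> (\<exists>L. (\<lambda>n. av (X n - L)) \<longlonglongrightarrow> 0)) \<and>
     finite C \<and> card C = q \<and> C \<subseteq> val_ring av \<and> 0 \<in> C \<and>
     (\<forall>x\<in>val_ring av. \<exists>!c\<in>C. av (x - c) < 1)"

text \<open>Integral part: if x = sum_{n>=v} c_n prm^n with digits c_n in C, then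
[x] = sum_{n>=0} c_n prm^n (limit w.r.t. av).\<close>
definition int_part :: "('a::field \<Rightarrow> real) \<Rightarrow> 'a \<Rightarrow> 'a set \<Rightarrow> 'a \<Rightarrow> 'a" where
  "int_part av prm C x = (THE y. \<exists>c::int \<Rightarrow> 'a. (\<forall>n. c n \<in> C) \<and>
      finite {n. n < 0 \<and> c n \<noteq> 0} \<and>
      (\<lambda>N. av ((\<Sum>n<N. c (int n) * prm ^ n) - y)) \<longlonglongrightarrow> 0 \<and>
      x = y + (\<Sum>n\<in>{n. n < 0 \<and> c n \<noteq> 0}. c n * inverse prm ^ nat (- n)))"

definition unif_distr :: "('a::field \<Rightarrow> real) \<Rightarrow> nat \<Rightarrow> (nat \<Rightarrow> 'a) \<Rightarrow> bool" where
  "unif_distr av q xs \<longleftrightarrow> (\<forall>n. xs n \<in> val_ring av) \<and>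
     (\<forall>a\<in>val_ring av. \<forall>k::nat.
        (\<lambda>N. real (card {n\<in>{1..N}. xs n \<in> disc av a (real q powr (- real k))}) / real N)
          \<longlonglongrightarrow> real q powr (- real k))"

definition haar_measure :: "('a::field \<Rightarrow> real) \<Rightarrow> 'a measure \<Rightarrow> bool" where
  "haar_measure av M \<longleftrightarrow> space M = UNIV \<and>
     sets M = sigma_sets UNIV {disc av a r | a r. True} \<and>
     (\<forall>A\<in>sets M. \<forall>a. emeasure M ((+) a ` A) = emeasure M A) \<and>
     0 < emeasure M (val_ring av) \<and> emeasure M (val_ring av) < \<infinity>"

end

theory Submission
  imports Defs "HOL-Library.Discrete_Functions"
begin

text \<open>Write x = [x] + {x} with {x} in the countable set of finite digit sums
sum_{-n <= i < 0} c_i prm^i. Then [beta^n x] lies in D(a, q^-k) iff beta^n x lies in the union G of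
the translates of D(a, q^-k) by such sums; put h_n(x) = 1_G(beta^n x) - q^-k. If m >= n + k, choose j
with |beta|^(m-n) = q^(j+k) and translate x by beta^-m v, where v runs over the q^(j+k) digit sums
sum_{-j <= i < k} c_i prm^i: this changes neither h_n(x) nor the unit disc around x, while exactly q^j
of the translates put beta^m x into G. By translation invariance of Haar measure h_n and h_m are thus
orthogonal on every unit disc B, so the integral over B of (h_1 + ... + h_N)^2 is at most 2kN mu(B).
Chebyshev and Borel-Cantelli along N = j^2 give (h_1 + ... + h_N)/N -> 0 almost everywhere on B along
the squares, and hence along all N, as the partial sums move by at most 1 per step. Countably many
unit discs, centres and precisions k remain.\<close>

section \<open>Averages of quasi-orthogonal functions\<close>

lemma abs_diff_le_of_unit_steps:
  fixes S :: "nat \<Rightarrow> real"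
  assumes steps: "\<And>n. \<bar>S (Suc n) - S n\<bar> \<le> 1" and "m \<le> n"
  shows "\<bar>S n - S m\<bar> \<le> real (n - m)"
  using \<open>m \<le> n\<close>
proof (induction n rule: dec_induct)
  case (step n)
  then show ?case using steps[of n] by simp
qed simp

lemma LIMSEQ_averages_of_squares:
  fixes S :: "nat \<Rightarrow> real"
  assumes steps: "\<And>n. \<bar>S (Suc n) - S n\<bar> \<le> 1"
    and squares: "(\<lambda>j. S (j\<^sup>2) / real (j\<^sup>2)) \<longlonglongrightarrow> 0"
  shows "(\<lambda>N. S N / real N) \<longlonglongrightarrow> 0"
proof -
  define bound where "bound r = \<bar>S (r\<^sup>2) / real (r\<^sup>2)\<bar> + 2 / real r" for r
  have "(\<lambda>r. \<bar>S (r\<^sup>2) / real (r\<^sup>2)\<bar> + 2 * (1 / real r)) \<longlonglongrightarrow> 0 + 2 * 0"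
    by (intro tendsto_add tendsto_mult tendsto_const tendsto_rabs_zero squares lim_inverse_n')
  then have "bound \<longlonglongrightarrow> 0"
    by (simp only: bound_def[abs_def] add_0_left mult_zero_right times_divide_eq_right mult_1_right)
  moreover have "filterlim floor_sqrt at_top sequentially"
    unfolding filterlim_at_top eventually_sequentially
    by (intro allI exI[of _ "_\<^sup>2"]) (auto simp: le_floor_sqrt_iff)
  ultimately have "(\<lambda>N. bound (floor_sqrt N)) \<longlonglongrightarrow> 0" by (rule filterlim_compose)
  moreover have "norm (S N / real N) \<le> bound (floor_sqrt N)" if "1 \<le> N" for N
  proof -
    define r where "r = floor_sqrt N"
    have r: "1 \<le> r" "r\<^sup>2 \<le> N" "N < (Suc r)\<^sup>2"
      using that Suc_floor_sqrt_power2_gt[of N] by (simp_all add: r_def le_floor_sqrt_iff floor_sqrt_power2_le)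
    have "\<bar>S N - S (r\<^sup>2)\<bar> \<le> real (N - r\<^sup>2)" using steps r(2) by (rule abs_diff_le_of_unit_steps)
    also have "\<dots> \<le> 2 * real r" using r(3) by (simp add: power2_eq_square of_nat_diff)
    finally have "\<bar>S N\<bar> \<le> \<bar>S (r\<^sup>2)\<bar> + 2 * real r" by linarith
    then have "\<bar>S N\<bar> / real N \<le> (\<bar>S (r\<^sup>2)\<bar> + 2 * real r) / real (r\<^sup>2)"
      using r by (intro frac_le) (simp_all flip: of_nat_power)
    also have "\<dots> = bound r" using r by (simp add: bound_def add_divide_distrib abs_divide power2_eq_square)
    finally show ?thesis by (simp add: r_def)
  qed
  then have "\<forall>\<^sub>F N in sequentially. norm (S N / real N) \<le> bound (floor_sqrt N)"
    unfolding eventually_sequentially by blast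
  ultimately show ?thesis by (rule Lim_null_comparison[rotated])
qed

lemma AE_tendsto_zero_of_summable_integrals:
  fixes f :: "nat \<Rightarrow> 'a \<Rightarrow> real"
  assumes int: "\<And>j. integrable M (f j)" and nonneg: "\<And>j x. 0 \<le> f j x"
    and summable: "summable (\<lambda>j. \<integral>x. f j x \<partial>M)"
  shows "AE x in M. (\<lambda>j. f j x) \<longlonglongrightarrow> 0"
proof -
  have [measurable]: "f j \<in> borel_measurable M" for j using int by blast
  have "(\<integral>\<^sup>+ x. (\<Sum>j. ennreal (f j x)) \<partial>M) = (\<Sum>j. \<integral>\<^sup>+ x. ennreal (f j x) \<partial>M)"
    by (rule nn_integral_suminf) measurable
  also have "\<dots> = (\<Sum>j. ennreal (\<integral>x. f j x \<partial>M))"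
    by (intro suminf_cong nn_integral_eq_integral int) (simp add: nonneg)
  also have "\<dots> \<noteq> \<infinity>"
    using ennreal_suminf_neq_top[OF summable Bochner_Integration.integral_nonneg[OF nonneg]] by simp
  finally have "AE x in M. (\<Sum>j. ennreal (f j x)) \<noteq> \<infinity>"
    by (intro nn_integral_PInf_AE) measurable
  then show ?thesis
  proof (rule AE_mp, intro AE_I2 impI)
    fix x assume "(\<Sum>j. ennreal (f j x)) \<noteq> \<infinity>"
    then have "summable (\<lambda>j. f j x)" by (intro summable_suminf_not_top) (simp_all add: nonneg)
    then show "(\<lambda>j. f j x) \<longlonglongrightarrow> 0" by (rule summable_LIMSEQ_zero)
  qed
qed

lemma integral_indicator_square_sum_le:
  fixes h :: "nat \<Rightarrow> 'a \<Rightarrow> real"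
  assumes B: "B \<in> sets M" "emeasure M B < \<infinity>"
    and h: "\<And>n. h n \<in> borel_measurable M" "\<And>n x. \<bar>h n x\<bar> \<le> 1"
    and orth: "\<And>n m. n + k \<le> m \<Longrightarrow> (\<integral>x. indicator B x * h n x * h m x \<partial>M) = 0"
  shows "(\<integral>x. indicator B x * (\<Sum>n\<in>{1..N}. h n x)\<^sup>2 \<partial>M) \<le> real (2 * k * N) * measure M B"
proof -
  have int: "integrable M (\<lambda>x. indicator B x * h n x * h m x)" for n m
    using integrableI_bounded_set_indicator[OF B(1) _ B(2), of "\<lambda>x. h n x * h m x" 1] h
    by (simp add: abs_mult mult_le_one mult.assoc)
  have near: "(\<integral>x. indicator B x * h n x * h m x \<partial>M)
      \<le> (if m < n + k \<and> n < m + k then measure M B else 0)" for n m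
  proof (cases "m < n + k \<and> n < m + k")
    case True
    have "\<bar>h n x * h m x\<bar> \<le> 1" for x using h(2) by (simp add: abs_mult mult_le_one)
    then have "(\<integral>x. indicator B x * h n x * h m x \<partial>M) \<le> (\<integral>x. indicator B x \<partial>M)"
      by (intro integral_mono int integrable_real_indicator B) (auto simp: indicator_def abs_le_iff)
    then show ?thesis using True B by simp
  next
    case False
    then have "n + k \<le> m \<or> m + k \<le> n" by auto
    then show ?thesis using orth[of n m] orth[of m n] False by (auto simp: ac_simps)
  qed
  have card_near: "card {m \<in> {1..N}. m < n + k \<and> n < m + k} \<le> 2 * k" for n
  proof -
    have "card {m \<in> {1..N}. m < n + k \<and> n < m + k} \<le> card {n - k<..<n + k}"
      by (intro card_mono) auto
    then show ?thesis by simp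
  qed
  have square: "indicator B x * (\<Sum>n\<in>{1..N}. h n x)\<^sup>2
      = (\<Sum>n\<in>{1..N}. \<Sum>m\<in>{1..N}. indicator B x * h n x * h m x)" for x
    by (cases "x \<in> B") (simp_all add: power2_eq_square sum_product)
  have "(\<integral>x. indicator B x * (\<Sum>n\<in>{1..N}. h n x)\<^sup>2 \<partial>M)
      = (\<Sum>n\<in>{1..N}. \<Sum>m\<in>{1..N}. \<integral>x. indicator B x * h n x * h m x \<partial>M)"
    unfolding square by (simp add: Bochner_Integration.integral_sum Bochner_Integration.integrable_sum int)
  also have "\<dots> \<le> (\<Sum>n\<in>{1..N}. \<Sum>m\<in>{1..N}. if m < n + k \<and> n < m + k then measure M B else 0)"
    by (intro sum_mono near)
  also have "\<dots> = (\<Sum>n\<in>{1..N}. real (card {m \<in> {1..N}. m < n + k \<and> n < m + k}) * measure M B)"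
    by (simp add: sum.If_cases Int_def)
  also have "\<dots> \<le> (\<Sum>n\<in>{1..N}. real (2 * k) * measure M B)"
    using card_near by (intro sum_mono mult_right_mono) (simp_all only: of_nat_le_iff measure_nonneg)
  also have "\<dots> = real (2 * k * N) * measure M B" by simp
  finally show ?thesis .
qed

lemma AE_averages_tendsto_zero_of_quasi_orthogonal:
  fixes h :: "nat \<Rightarrow> 'a \<Rightarrow> real"
  assumes B: "B \<in> sets M" "emeasure M B < \<infinity>"
    and h: "\<And>n. h n \<in> borel_measurable M" "\<And>n x. \<bar>h n x\<bar> \<le> 1"
    and orth: "\<And>n m. n + k \<le> m \<Longrightarrow> (\<integral>x. indicator B x * h n x * h m x \<partial>M) = 0"
  shows "AE x in M. x \<in> B \<longrightarrow> (\<lambda>N. (\<Sum>n\<in>{1..N}. h n x) / real N) \<longlonglongrightarrow> 0"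
proof -
  define S where "S N x = (\<Sum>n\<in>{1..N}. h n x)" for N x
  define W where "W j x = indicator B x * (S (j\<^sup>2) x / real (j\<^sup>2))\<^sup>2" for j x
  define c where "c = real (2 * k) * measure M B"
  have [measurable]: "h n \<in> borel_measurable M" for n by (rule h(1))
  have [measurable]: "S N \<in> borel_measurable M" for N unfolding S_def by measurable
  have "\<bar>S N x\<bar> \<le> real N" for N x
  proof -
    have "\<bar>S N x\<bar> \<le> (\<Sum>n\<in>{1..N}. \<bar>h n x\<bar>)" unfolding S_def by (rule sum_abs)
    also have "\<dots> \<le> (\<Sum>n\<in>{1..N}. 1)" by (intro sum_mono h(2))
    finally show ?thesis by simp
  qed
  then have square_le: "(S N x / real N)\<^sup>2 \<le> 1" for N x
    by (cases "N = 0") (simp_all add: abs_square_le_1 abs_divide)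
  then have int: "integrable M (W j)" for j
    using integrableI_bounded_set_indicator[OF B(1) _ B(2), of "\<lambda>x. (S (j\<^sup>2) x / real (j\<^sup>2))\<^sup>2" 1]
      square_le[of "j\<^sup>2"]
    by (simp add: W_def[abs_def] del: of_nat_power)
  have W_nonneg: "0 \<le> W j x" for j x by (simp add: W_def)
  have integral_W_le: "(\<integral>x. W j x \<partial>M) \<le> c * inverse (real j ^ 2)" for j
  proof -
    have "(\<integral>x. W j x \<partial>M) = (\<integral>x. indicator B x * (S (j\<^sup>2) x)\<^sup>2 \<partial>M) / (real (j\<^sup>2))\<^sup>2"
      by (simp add: W_def power_divide flip: integral_divide_zero)
    also have "\<dots> \<le> real (2 * k * j\<^sup>2) * measure M B / (real (j\<^sup>2))\<^sup>2"
      unfolding S_def by (intro divide_right_mono integral_indicator_square_sum_le B h orth) simp_all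
    also have "\<dots> = c * inverse (real j ^ 2)"
      by (cases "j = 0") (simp_all add: c_def power2_eq_square field_simps)
    finally show ?thesis .
  qed
  have "summable (\<lambda>j. c * inverse (real j ^ 2))"
    by (intro summable_mult inverse_power_summable) simp
  then have "summable (\<lambda>j. \<integral>x. W j x \<partial>M)"
    by (rule summable_comparison_test') (simp add: Bochner_Integration.integral_nonneg W_nonneg integral_W_le)
  with int W_nonneg have "AE x in M. (\<lambda>j. W j x) \<longlonglongrightarrow> 0"
    by (rule AE_tendsto_zero_of_summable_integrals)
  then show ?thesis
  proof (rule AE_mp, intro AE_I2 impI)
    fix x assume "(\<lambda>j. W j x) \<longlonglongrightarrow> 0" and "x \<in> B"
    then have "(\<lambda>j. (S (j\<^sup>2) x / real (j\<^sup>2))\<^sup>2) \<longlonglongrightarrow> 0" by (simp add: W_def)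
    then have "(\<lambda>j. sqrt ((S (j\<^sup>2) x / real (j\<^sup>2))\<^sup>2)) \<longlonglongrightarrow> sqrt 0" by (rule tendsto_real_sqrt)
    then have "(\<lambda>j. \<bar>S (j\<^sup>2) x / real (j\<^sup>2)\<bar>) \<longlonglongrightarrow> 0" by (simp only: real_sqrt_abs real_sqrt_zero)
    then have squares: "(\<lambda>j. S (j\<^sup>2) x / real (j\<^sup>2)) \<longlonglongrightarrow> 0" by (rule tendsto_rabs_zero_cancel)
    have "S (Suc n) x = S n x + h (Suc n) x" for n by (simp add: S_def)
    then have steps: "\<bar>S (Suc n) x - S n x\<bar> \<le> 1" for n by (simp add: h(2))
    show "(\<lambda>N. (\<Sum>n\<in>{1..N}. h n x) / real N) \<longlonglongrightarrow> 0"
      using LIMSEQ_averages_of_squares[of "\<lambda>N. S N x", OF steps squares] unfolding S_def .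
  qed
qed

section \<open>Digit expansions in a local field\<close>

locale local_field =
  fixes av :: "'a::field \<Rightarrow> real" and q :: nat and prm :: 'a and C :: "'a set"
  assumes local_field: "nonarch_local_field av q prm C"
begin

lemma
  shows av_nonneg: "0 \<le> av x"
    and av_eq_0_iff [simp]: "av x = 0 \<longleftrightarrow> x = 0"
    and av_mult: "av (x * y) = av x * av y"
    and av_add_le_max: "av (x + y) \<le> max (av x) (av y)"
    and av_value_group: "x \<noteq> 0 \<Longrightarrow> \<exists>k::int. av x = real q powr real_of_int k"
    and av_prm: "av prm = 1 / real q"
    and finite_C: "finite C"
    and card_C: "card C = q"
    and av_C_le_1: "c \<in> C \<Longrightarrow> av c \<le> 1"
    and zero_in_C: "0 \<in> C"
    and unique_residue: "av z \<le> 1 \<Longrightarrow> \<exists>!c\<in>C. av (z - c) < 1"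
  using local_field unfolding nonarch_local_field_def val_ring_def mem_Collect_eq
  by (simp_all add: subset_iff)

lemma av_0 [simp]: "av 0 = 0" and av_1 [simp]: "av 1 = 1"
  using av_mult[of 1 1] by simp_all

lemma av_minus [simp]: "av (- x) = av x"
proof -
  have "av (- 1) * av (- 1) = 1" using av_mult[of "- 1" "- 1"] by simp
  then have "av (- 1) = 1"
    using av_nonneg[of "- 1"] power2_eq_1_iff[of "av (- 1)"] by (simp add: power2_eq_square)
  then show ?thesis using av_mult[of "- 1" x] by simp
qed

lemma av_minus_commute: "av (x - y) = av (y - x)"
  by (metis av_minus minus_diff_eq)

lemma av_inverse: "av (inverse x) = inverse (av x)"
proof (cases "x = 0")
  case False
  then have "av x * av (inverse x) = 1" by (simp flip: av_mult)
  then show ?thesis by (simp add: inverse_unique)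
qed simp

lemma av_power: "av (x ^ n) = av x ^ n"
  by (induction n) (simp_all add: av_mult)

lemma av_power_int: "av (x powi n) = av x powi n"
  by (cases "0 \<le> n") (simp_all add: power_int_def av_power av_inverse power_inverse)

lemma av_add_le: "av x \<le> r \<Longrightarrow> av y \<le> r \<Longrightarrow> av (x + y) \<le> r"
  using av_add_le_max[of x y] by simp

lemma av_diff_le: "av x \<le> r \<Longrightarrow> av y \<le> r \<Longrightarrow> av (x - y) \<le> r"
  using av_add_le[of x r "- y"] by simp

lemma av_add_eq_of_less: "av y < av x \<Longrightarrow> av (x + y) = av x"
  using av_add_le_max[of x y] av_add_le_max[of "x + y" "- y"] by (simp add: max_def split: if_splits)

lemma av_sum_le: "(\<And>i. i \<in> I \<Longrightarrow> av (f i) \<le> r) \<Longrightarrow> 0 \<le> r \<Longrightarrow> av (sum f I) \<le> r"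
  by (induction I rule: infinite_finite_induct) (simp_all add: av_add_le)

lemma two_le_q: "2 \<le> q"
proof -
  obtain c where "c \<in> C" "av (1 - c) < 1" using unique_residue[of 1] by auto
  moreover from this have "c \<noteq> 0" by auto
  ultimately have "{0, c} \<subseteq> C" using zero_in_C by blast
  then have "card {0, c} \<le> q" using card_mono[OF finite_C] card_C by metis
  then show ?thesis using \<open>c \<noteq> 0\<close> by simp
qed

definition qpow :: "int \<Rightarrow> real" where "qpow k = real q powr real_of_int k"

lemma qpow_pos [simp]: "0 < qpow k" and qpow_nonneg [simp]: "0 \<le> qpow k"
  using two_le_q by (simp_all add: qpow_def)

lemma qpow_add: "qpow (k + l) = qpow k * qpow l"
  using two_le_q by (simp add: qpow_def powr_add)

lemma qpow_less_iff [simp]: "qpow k < qpow l \<longleftrightarrow> k < l"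
  and qpow_le_iff [simp]: "qpow k \<le> qpow l \<longleftrightarrow> k \<le> l"
  using two_le_q by (simp_all add: qpow_def)

lemma qpow_0 [simp]: "qpow 0 = 1"
  using two_le_q by (simp add: qpow_def)

lemma qpow_le_1_iff [simp]: "qpow k \<le> 1 \<longleftrightarrow> k \<le> 0"
  using qpow_le_iff[of k 0] by simp

lemma qpow_uminus: "qpow (- k) = inverse (qpow k)"
  by (rule inverse_unique[symmetric]) (simp flip: qpow_add)

lemma qpow_power: "qpow k ^ n = qpow (k * int n)"
  by (induction n) (simp_all add: qpow_add algebra_simps)

lemma qpow_minus_of_nat: "qpow (- int k) = real q powr (- real k)"
  by (simp add: qpow_def)

lemma qpow_minus_of_nat_mult: "qpow (- int k) * real q ^ k = 1"
  using two_le_q by (simp add: qpow_def powr_minus powr_realpow)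

lemma av_value_qpow: "x \<noteq> 0 \<Longrightarrow> \<exists>k. av x = qpow k"
  using av_value_group by (simp add: qpow_def)

lemma av_le_of_less_qpow: "av x < qpow (k + 1) \<Longrightarrow> av x \<le> qpow k"
  by (cases "x = 0") (auto dest: av_value_qpow)

lemma av_prm_power_int: "av (prm powi n) = qpow (- n)"
proof -
  have "av (prm powi n) = inverse (real q) powi n" by (simp add: av_power_int av_prm divide_inverse)
  also have "\<dots> = qpow (- n)"
    using two_le_q powr_real_of_int'[of "real q" "- n"]
    by (simp add: qpow_def power_int_inverse flip: power_int_minus)
  finally show ?thesis .
qed

lemma prm_nonzero: "prm \<noteq> 0"
  using av_prm two_le_q by auto

lemma av_diff_C:
  assumes C: "c \<in> C" "c' \<in> C" "c \<noteq> c'"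
  shows "av (c - c') = 1"
proof -
  obtain c0 where "\<forall>y\<in>C. av (c - y) < 1 \<longrightarrow> y = c0" using unique_residue[OF av_C_le_1[OF C(1)]] by blast
  then have "\<not> av (c - c') < 1" using C by (metis av_0 diff_self zero_less_one)
  moreover have "av (c - c') \<le> 1" using C by (intro av_diff_le av_C_le_1)
  ultimately show ?thesis by simp
qed

lemma exists_residue:
  assumes "av z \<le> 1"
  shows "\<exists>c\<in>C. av (z - c) \<le> qpow (- 1)"
proof -
  obtain c where "c \<in> C" "av (z - c) < qpow (- 1 + 1)" using unique_residue[OF assms] by fastforce
  then show ?thesis using av_le_of_less_qpow by blast
qed

end

fun digit_val :: "'a::field \<Rightarrow> int \<Rightarrow> 'a list \<Rightarrow> 'a" where
  "digit_val p e [] = 0"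
| "digit_val p e (c # ds) = c * p powi e + digit_val p (e + 1) ds"

lemma digit_val_append:
  "digit_val p e (xs @ ys) = digit_val p e xs + digit_val p (e + int (length xs)) ys"
  by (induction xs arbitrary: e) (simp_all add: algebra_simps)

lemma digit_val_eq_sum: "digit_val p e ds = (\<Sum>i<length ds. ds ! i * p powi (e + int i))"
proof (induction ds arbitrary: e)
  case (Cons c ds)
  then show ?case by (simp add: sum.lessThan_Suc_shift algebra_simps del: sum.lessThan_Suc)
qed simp

lemma digit_val_replicate_0: "digit_val p (e - int n) (replicate n 0 @ ds) = digit_val p e ds"
  by (induction n) (simp_all add: algebra_simps)

context local_field
begin

definition digits :: "nat \<Rightarrow> 'a list set" where
  "digits n = {ds. set ds \<subseteq> C \<and> length ds = n}"

lemma finite_digits: "finite (digits n)"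
  unfolding digits_def using finite_lists_length_eq[OF finite_C] .

lemma card_digits: "card (digits n) = q ^ n"
  unfolding digits_def using card_lists_length_eq[OF finite_C] card_C by simp

lemma card_digits_Suc_filter:
  "card {ds \<in> digits (Suc n). P ds} = (\<Sum>c\<in>C. card {ds \<in> digits n. P (c # ds)})"
proof -
  have "{ds \<in> digits (Suc n). P ds} = (\<lambda>(c, ds). c # ds) ` (SIGMA c:C. {ds \<in> digits n. P (c # ds)})"
    by (auto simp: digits_def image_iff length_Suc_conv)
  moreover have "inj_on (\<lambda>(c, ds). c # ds) (SIGMA c:C. {ds \<in> digits n. P (c # ds)})"
    by (auto simp: inj_on_def)
  ultimately show ?thesis
    using finite_C finite_digits by (simp add: card_image card_SigmaI)
qed

lemma av_digit_val_le: "set ds \<subseteq> C \<Longrightarrow> av (digit_val prm e ds) \<le> qpow (- e)"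
proof (induction ds arbitrary: e)
  case (Cons c ds)
  have "av (c * prm powi e) \<le> qpow (- e)"
    using Cons.prems av_C_le_1[of c] by (simp add: av_mult av_prm_power_int mult_le_cancel_right1)
  moreover have "av (digit_val prm (e + 1) ds) \<le> qpow (- (e + 1))" using Cons.IH[of "e + 1"] Cons.prems by simp
  then have "av (digit_val prm (e + 1) ds) \<le> qpow (- e)" by (rule order_trans) simp
  ultimately show ?case by (simp add: av_add_le)
qed simp

lemma exists_digit_val_approx:
  assumes "av z \<le> qpow (- e)"
  shows "\<exists>ds\<in>digits n. av (z - digit_val prm e ds) \<le> qpow (- (e + int n))"
  using assms
proof (induction n arbitrary: z e)
  case (Suc n)
  define w where "w = z * prm powi (- e)"
  have "av w \<le> 1"
    using Suc.prems qpow_uminus[of e] by (simp add: w_def av_mult av_prm_power_int field_simps)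
  then obtain c where c: "c \<in> C" "av (w - c) \<le> qpow (- 1)" using exists_residue by blast
  have "z - c * prm powi e = (w - c) * prm powi e"
    using prm_nonzero by (simp add: w_def algebra_simps power_int_minus_mult flip: power_int_add)
  then have "av (z - c * prm powi e) = av (w - c) * qpow (- e)" by (simp add: av_mult av_prm_power_int)
  also have "\<dots> \<le> qpow (- 1) * qpow (- e)" using c by (simp add: mult_right_mono)
  also have "\<dots> = qpow (- (e + 1))" by (simp add: algebra_simps flip: qpow_add)
  finally have "av (z - c * prm powi e) \<le> qpow (- (e + 1))" .
  then obtain ds where "ds \<in> digits n"
    "av (z - c * prm powi e - digit_val prm (e + 1) ds) \<le> qpow (- (e + 1 + int n))"
    using Suc.IH by blast
  then show ?case using c by (intro bexI[of _ "c # ds"]) (auto simp: digits_def algebra_simps)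
qed (simp add: digits_def)

lemma digits_eq_of_approx:
  assumes "ds \<in> digits n" "ds' \<in> digits n"
    and "av (digit_val prm e ds - digit_val prm e ds') \<le> qpow (- (e + int n))"
  shows "ds = ds'"
  using assms
proof (induction ds arbitrary: ds' e n)
  case Nil
  then show ?case by (simp add: digits_def)
next
  case (Cons c ds)
  then obtain c' ds2 n' where ds': "ds' = c' # ds2" "n = Suc n'" "c \<in> C" "c' \<in> C"
    "ds \<in> digits n'" "ds2 \<in> digits n'"
    by (cases ds') (auto simp: digits_def)
  define tail where "tail = digit_val prm (e + 1) ds - digit_val prm (e + 1) ds2"
  have eq: "digit_val prm e (c # ds) - digit_val prm e ds' = (c - c') * prm powi e + tail"
    using ds' by (simp add: tail_def algebra_simps)
  have bound: "av ((c - c') * prm powi e + tail) \<le> qpow (- (e + int n))"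
    using Cons.prems(3) unfolding eq .
  have "av tail \<le> qpow (- (e + 1))"
    unfolding tail_def using ds' by (intro av_diff_le av_digit_val_le) (auto simp: digits_def)
  then have tail_less: "av tail < qpow (- e)" by (rule le_less_trans) simp
  have "c = c'"
  proof (rule ccontr)
    assume "c \<noteq> c'"
    then have "av ((c - c') * prm powi e + tail) = qpow (- e)"
      using ds' tail_less by (simp add: av_add_eq_of_less av_mult av_diff_C av_prm_power_int)
    then show False using bound ds'(2) by simp
  qed
  then have "av tail \<le> qpow (- (e + 1 + int n'))" using bound ds'(2) by (simp add: algebra_simps)
  then have "ds = ds2" using Cons.IH ds' unfolding tail_def by blast
  then show ?case using \<open>c = c'\<close> ds' by simp
qed

definition fracs :: "'a set" where
  "fracs = (\<Union>n. digit_val prm (- int n) ` digits n)"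

lemma countable_fracs: "countable fracs"
  unfolding fracs_def by (rule countable_UN) (simp_all add: countable_finite finite_digits)

lemma exists_av_le_qpow: "\<exists>n. av z \<le> qpow (int n)"
proof (cases "z = 0")
  case False
  then obtain k where "av z = qpow k" using av_value_qpow by blast
  then show ?thesis by (intro exI[of _ "nat k"]) simp
qed (auto intro: exI[of _ 0])

lemma exists_frac_near: "\<exists>r\<in>fracs. av (z - r) \<le> 1"
proof -
  obtain n where "av z \<le> qpow (- (- int n))" using exists_av_le_qpow by auto
  from exists_digit_val_approx[OF this, of n] show ?thesis
    unfolding fracs_def by fastforce
qed

lemma fracs_eq_of_near:
  assumes "r \<in> fracs" "r' \<in> fracs" "av (r - r') \<le> 1"
  shows "r = r'"
proof -
  obtain n ds n' ds' where r: "r = digit_val prm (- int n) ds" "ds \<in> digits n"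
    and r': "r' = digit_val prm (- int n') ds'" "ds' \<in> digits n'"
    using assms(1,2) unfolding fracs_def by blast
  define m where "m = max n n'"
  define xs where "xs = replicate (m - n) 0 @ ds"
  define xs' where "xs' = replicate (m - n') 0 @ ds'"
  have "r = digit_val prm (- int m) xs" "r' = digit_val prm (- int m) xs'"
    using digit_val_replicate_0[of prm "- int n" "m - n" ds] digit_val_replicate_0[of prm "- int n'" "m - n'" ds']
    by (simp_all add: r r' xs_def xs'_def m_def of_nat_diff)
  moreover have "xs \<in> digits m" "xs' \<in> digits m"
    using r r' zero_in_C by (auto simp: xs_def xs'_def m_def digits_def)
  ultimately show ?thesis
    using assms(3) digits_eq_of_approx[of xs m xs' "- int m"] by simp
qed

definition frac_part :: "'a \<Rightarrow> 'a" where
  "frac_part z = (SOME r. r \<in> fracs \<and> av (z - r) \<le> 1)"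

lemma frac_part: "frac_part z \<in> fracs" "av (z - frac_part z) \<le> 1"
  using someI_ex[OF exists_frac_near[unfolded Bex_def]] unfolding frac_part_def by auto

lemma frac_part_unique: "r \<in> fracs \<Longrightarrow> av (z - r) \<le> 1 \<Longrightarrow> frac_part z = r"
  using fracs_eq_of_near[of "frac_part z" r] frac_part[of z] av_diff_le[of "z - r" 1 "z - frac_part z"]
  by simp

definition int_digits :: "'a \<Rightarrow> nat \<Rightarrow> 'a list" where
  "int_digits y n = (SOME ds. ds \<in> digits n \<and> av (y - digit_val prm 0 ds) \<le> qpow (- int n))"

lemma int_digits:
  assumes "av y \<le> 1"
  shows "int_digits y n \<in> digits n" "av (y - digit_val prm 0 (int_digits y n)) \<le> qpow (- int n)"
proof -
  have "\<exists>ds\<in>digits n. av (y - digit_val prm 0 ds) \<le> qpow (- int n)"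
    using exists_digit_val_approx[of y 0 n] assms by simp
  from someI_ex[OF this[unfolded Bex_def]]
  show "int_digits y n \<in> digits n" "av (y - digit_val prm 0 (int_digits y n)) \<le> qpow (- int n)"
    unfolding int_digits_def by auto
qed

lemma take_int_digits:
  assumes y: "av y \<le> 1" and "m \<le> n"
  shows "take m (int_digits y n) = int_digits y m"
proof (rule digits_eq_of_approx[where e = 0])
  define ds where "ds = int_digits y n"
  have ds: "ds \<in> digits n" "av (y - digit_val prm 0 ds) \<le> qpow (- int n)"
    using int_digits[OF y] by (simp_all add: ds_def)
  show take: "take m ds \<in> digits m"
    using ds(1) \<open>m \<le> n\<close> by (auto simp: digits_def dest: in_set_takeD)
  have "digit_val prm 0 ds = digit_val prm 0 (take m ds) + digit_val prm (int m) (drop m ds)"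
    using digit_val_append[of prm 0 "take m ds" "drop m ds"] take by (simp add: digits_def)
  then have split:
    "y - digit_val prm 0 (take m ds) = (y - digit_val prm 0 ds) + digit_val prm (int m) (drop m ds)"
    by simp
  have "av (digit_val prm (int m) (drop m ds)) \<le> qpow (- int m)"
    using ds(1) by (intro av_digit_val_le) (auto simp: digits_def dest: in_set_dropD)
  moreover have "av (y - digit_val prm 0 ds) \<le> qpow (- int m)"
    using ds(2) by (rule order_trans) (simp add: \<open>m \<le> n\<close>)
  ultimately have "av (y - digit_val prm 0 (take m ds)) \<le> qpow (- int m)"
    unfolding split by (intro av_add_le)
  then have "av ((y - digit_val prm 0 (int_digits y m)) - (y - digit_val prm 0 (take m ds))) \<le> qpow (- int m)"
    by (rule av_diff_le[OF int_digits(2)[OF y]])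
  then show "av (digit_val prm 0 (take m ds) - digit_val prm 0 (int_digits y m)) \<le> qpow (- (0 + int m))"
    by simp
  show "int_digits y m \<in> digits m" using int_digits[OF y] by simp
qed

definition int_digit :: "'a \<Rightarrow> nat \<Rightarrow> 'a" where
  "int_digit y i = int_digits y (Suc i) ! i"

lemma int_digit_in_C: "av y \<le> 1 \<Longrightarrow> int_digit y i \<in> C"
  using int_digits(1)[of y "Suc i"] by (auto simp: int_digit_def digits_def)

lemma sum_int_digit: "av y \<le> 1 \<Longrightarrow> (\<Sum>i<n. int_digit y i * prm ^ i) = digit_val prm 0 (int_digits y n)"
  using int_digits(1)[of y n] take_int_digits[of y "Suc _" n, symmetric]
  by (auto simp: digit_val_eq_sum digits_def int_digit_def power_int_def intro!: sum.cong)

lemma sum_neg_digits_eq_digit_val: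
  assumes "\<And>i. i < 0 \<Longrightarrow> c i \<noteq> 0 \<Longrightarrow> - int n \<le> i"
  shows "(\<Sum>i\<in>{i. i < 0 \<and> c i \<noteq> 0}. c i * inverse prm ^ nat (- i))
       = digit_val prm (- int n) (map (\<lambda>i. c (int i - int n)) [0..<n])"
proof -
  have "(\<Sum>i\<in>{i. i < 0 \<and> c i \<noteq> 0}. c i * inverse prm ^ nat (- i))
      = (\<Sum>i\<in>{- int n..<0}. c i * inverse prm ^ nat (- i))"
    by (rule sum.mono_neutral_left) (use assms in auto)
  also have "\<dots> = (\<Sum>i<n. c (int i - int n) * prm powi (- int n + int i))"
  proof (rule sum.reindex_cong[of "\<lambda>i. int i - int n"])
    show "{- int n..<0} = (\<lambda>i. int i - int n) ` {..<n}"
    proof safe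
      fix i :: int assume "i \<in> {- int n..<0}"
      then show "i \<in> (\<lambda>i. int i - int n) ` {..<n}" by (intro image_eqI[of _ _ "nat (i + int n)"]) auto
    qed auto
  qed (auto simp: inj_on_def power_int_def)
  also have "\<dots> = digit_val prm (- int n) (map (\<lambda>i. c (int i - int n)) [0..<n])"
    by (simp add: digit_val_eq_sum)
  finally show ?thesis .
qed

definition digit_expansion :: "'a \<Rightarrow> 'a \<Rightarrow> (int \<Rightarrow> 'a) \<Rightarrow> bool" where
  "digit_expansion x y c \<longleftrightarrow> (\<forall>n. c n \<in> C) \<and> finite {n. n < 0 \<and> c n \<noteq> 0} \<and>
     (\<lambda>N. av ((\<Sum>n<N. c (int n) * prm ^ n) - y)) \<longlonglongrightarrow> 0 \<and>
     x = y + (\<Sum>n\<in>{n. n < 0 \<and> c n \<noteq> 0}. c n * inverse prm ^ nat (- n))"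

lemma digit_expansion_exists: "\<exists>c. digit_expansion x (x - frac_part x) c"
proof -
  define y where "y = x - frac_part x"
  have y: "av y \<le> 1" using frac_part(2) by (simp add: y_def)
  obtain n ds where frac: "frac_part x = digit_val prm (- int n) ds" "ds \<in> digits n"
    using frac_part(1)[of x] unfolding fracs_def by blast
  define c where "c i = (if 0 \<le> i then int_digit y (nat i) else if - int n \<le> i then ds ! nat (i + int n) else 0)"
    for i
  have "c i \<in> C" for i
    using int_digit_in_C[OF y] frac(2) zero_in_C by (auto simp: c_def digits_def)
  moreover have bounded: "- int n \<le> i" if "i < 0" "c i \<noteq> 0" for i
    using that by (auto simp: c_def split: if_splits)
  then have "finite {i. i < 0 \<and> c i \<noteq> 0}"
    by (intro finite_subset[OF _ finite_atLeastLessThan_int[of "- int n" 0]]) auto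
  moreover have "(\<lambda>N. av ((\<Sum>i<N. c (int i) * prm ^ i) - y)) \<longlonglongrightarrow> 0"
  proof (rule tendsto_sandwich[of "\<lambda>_. 0" _ _ "\<lambda>N. qpow (- int N)"])
    have "(\<Sum>i<N. c (int i) * prm ^ i) = digit_val prm 0 (int_digits y N)" for N
      using sum_int_digit[OF y, of N] by (simp add: c_def)
    then show "\<forall>\<^sub>F N in sequentially. av ((\<Sum>i<N. c (int i) * prm ^ i) - y) \<le> qpow (- int N)"
      using int_digits(2)[OF y] by (simp add: av_minus_commute)
    have "qpow (- int N) = inverse (real q ^ N)" for N
      using two_le_q by (simp add: qpow_def powr_minus powr_realpow)
    then show "(\<lambda>N. qpow (- int N)) \<longlonglongrightarrow> 0"
      using two_le_q by (simp add: LIMSEQ_inverse_realpow_zero power_inverse)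
  qed (simp_all add: av_nonneg)
  moreover have "map (\<lambda>i. c (int i - int n)) [0..<n] = ds"
    using frac(2) by (intro nth_equalityI) (auto simp: c_def digits_def)
  then have "x = y + (\<Sum>i\<in>{i. i < 0 \<and> c i \<noteq> 0}. c i * inverse prm ^ nat (- i))"
    using sum_neg_digits_eq_digit_val[of c n, OF bounded] frac(1) by (simp add: y_def)
  ultimately show ?thesis unfolding digit_expansion_def y_def by blast
qed

lemma digit_expansion_unique:
  assumes "digit_expansion x y c"
  shows "y = x - frac_part x"
proof -
  have C: "\<And>i. c i \<in> C" and fin: "finite {i. i < 0 \<and> c i \<noteq> 0}"
    and lim: "(\<lambda>N. av ((\<Sum>i<N. c (int i) * prm ^ i) - y)) \<longlonglongrightarrow> 0"
    and x: "x = y + (\<Sum>i\<in>{i. i < 0 \<and> c i \<noteq> 0}. c i * inverse prm ^ nat (- i))"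
    using assms unfolding digit_expansion_def by blast+
  obtain m where "\<forall>i\<in>{i. i < 0 \<and> c i \<noteq> 0}. m \<le> i" using bdd_below_finite[OF fin] by (auto simp: bdd_below_def)
  then have bounded: "- int (nat (- m)) \<le> i" if "i < 0" "c i \<noteq> 0" for i using that by force
  define r where "r = (\<Sum>i\<in>{i. i < 0 \<and> c i \<noteq> 0}. c i * inverse prm ^ nat (- i))"
  have "r \<in> fracs"
    using sum_neg_digits_eq_digit_val[of c, OF bounded] C
    unfolding r_def fracs_def digits_def by (intro UN_I[of "nat (- m)"] image_eqI) auto
  obtain N where N: "av ((\<Sum>i<N. c (int i) * prm ^ i) - y) < 1"
    using order_tendstoD(2)[OF lim, of 1] by (auto simp: eventually_sequentially)
  have "av (\<Sum>i<N. c (int i) * prm ^ i) \<le> 1"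
  proof (rule av_sum_le)
    fix i
    have "av (prm ^ i) \<le> 1" using av_prm two_le_q by (simp add: av_power power_le_one)
    then show "av (c (int i) * prm ^ i) \<le> 1"
      using av_C_le_1[OF C] av_nonneg by (simp add: av_mult mult_le_one)
  qed simp
  then have "av y \<le> 1"
    using av_diff_le[of "\<Sum>i<N. c (int i) * prm ^ i" 1 "(\<Sum>i<N. c (int i) * prm ^ i) - y"] N by simp
  moreover have "x - r = y" using x by (simp add: r_def)
  ultimately have "frac_part x = r" using \<open>r \<in> fracs\<close> by (intro frac_part_unique) simp_all
  then show ?thesis using \<open>x - r = y\<close> by simp
qed

lemma int_part_eq: "int_part av prm C x = x - frac_part x"
proof -
  have "int_part av prm C x = (THE y. \<exists>c. digit_expansion x y c)"
    unfolding int_part_def digit_expansion_def ..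
  also have "\<dots> = x - frac_part x"
    using digit_expansion_exists digit_expansion_unique by blast
  finally show ?thesis .
qed

lemma frac_part_add: "av u \<le> 1 \<Longrightarrow> frac_part (z + u) = frac_part z"
  using frac_part[of z] av_add_le[of "z - frac_part z" 1 u]
  by (intro frac_part_unique) (simp_all add: algebra_simps)

definition disc_plus_fracs :: "'a \<Rightarrow> nat \<Rightarrow> 'a set" where
  "disc_plus_fracs a k = {z. \<exists>r\<in>fracs. av (z - a - r) \<le> qpow (- int k)}"

lemma mem_disc_plus_fracs_iff:
  "z \<in> disc_plus_fracs a k \<longleftrightarrow> av (z - a - frac_part (z - a)) \<le> qpow (- int k)"
proof
  assume "z \<in> disc_plus_fracs a k"
  then obtain r where r: "r \<in> fracs" "av (z - a - r) \<le> qpow (- int k)" by (auto simp: disc_plus_fracs_def)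
  moreover from r(2) have "av (z - a - r) \<le> 1" by (rule order_trans) simp
  ultimately show "av (z - a - frac_part (z - a)) \<le> qpow (- int k)" using frac_part_unique by simp
qed (use frac_part in \<open>auto simp: disc_plus_fracs_def\<close>)

lemma int_part_in_disc_iff:
  assumes "av a \<le> 1"
  shows "int_part av prm C z \<in> disc av a (qpow (- int k)) \<longleftrightarrow> z \<in> disc_plus_fracs a k"
  using frac_part_add[of "- a" z] assms
  by (simp add: mem_disc_plus_fracs_iff int_part_eq disc_def algebra_simps)

lemma disc_plus_fracs_translate:
  assumes "av u \<le> qpow (- int k)"
  shows "z + u \<in> disc_plus_fracs a k \<longleftrightarrow> z \<in> disc_plus_fracs a k"
proof -
  have "av (z + u - a - r) \<le> qpow (- int k) \<longleftrightarrow> av (z - a - r) \<le> qpow (- int k)" for r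
    using av_add_le[of "z - a - r" _ u] av_diff_le[of "z + u - a - r" _ u] assms
    by (auto simp: algebra_simps)
  then show ?thesis unfolding disc_plus_fracs_def by simp
qed

lemma disc_plus_fracs_cong:
  assumes "av (a - a') \<le> qpow (- int k)"
  shows "disc_plus_fracs a k = disc_plus_fracs a' k"
proof -
  have "z \<in> disc_plus_fracs a k \<longleftrightarrow> z + (a' - a) \<in> disc_plus_fracs a' k" for z
    unfolding disc_plus_fracs_def by (simp add: algebra_simps)
  moreover have "z + (a' - a) \<in> disc_plus_fracs a' k \<longleftrightarrow> z \<in> disc_plus_fracs a' k" for z
    using assms by (intro disc_plus_fracs_translate) (simp add: av_minus_commute)
  ultimately show ?thesis by blast
qed

lemma disc_plus_fracs_eq_UN: "disc_plus_fracs a k = (\<Union>r\<in>fracs. disc av (a + r) (qpow (- int k)))"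
  unfolding disc_plus_fracs_def disc_def by (auto simp: algebra_simps)

lemma card_digits_approx:
  assumes "av w \<le> 1"
  shows "card {ds \<in> digits k. av (w + digit_val prm 0 ds) \<le> qpow (- int k)} = 1"
proof -
  obtain ds0 where ds0: "ds0 \<in> digits k" "av (- w - digit_val prm 0 ds0) \<le> qpow (- int k)"
    using exists_digit_val_approx[of "- w" 0 k] assms by auto
  have "ds = ds0" if "ds \<in> digits k" "av (w + digit_val prm 0 ds) \<le> qpow (- int k)" for ds
  proof (rule digits_eq_of_approx[OF that(1) ds0(1)])
    show "av (digit_val prm 0 ds - digit_val prm 0 ds0) \<le> qpow (- (0 + int k))"
      using av_add_le[OF that(2) ds0(2)] by simp
  qed
  moreover have "- w - digit_val prm 0 ds0 = - (w + digit_val prm 0 ds0)" by simp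
  then have "av (w + digit_val prm 0 ds0) \<le> qpow (- int k)" using ds0(2) by (metis av_minus)
  ultimately have "{ds \<in> digits k. av (w + digit_val prm 0 ds) \<le> qpow (- int k)} = {ds0}"
    using ds0(1) by blast
  then show ?thesis by simp
qed

lemma card_digit_translates_in_disc_plus_fracs:
  assumes "av a \<le> 1"
  shows "card {ds \<in> digits (j + k). y + digit_val prm (- int j) ds \<in> disc_plus_fracs a k} = q ^ j"
proof (induction j arbitrary: y)
  case 0
  have "frac_part (y + digit_val prm 0 ds - a) = frac_part (y - a)" if "ds \<in> digits k" for ds
    using that frac_part_add[of "digit_val prm 0 ds" "y - a"] av_digit_val_le[of ds 0]
    by (simp add: digits_def algebra_simps)
  then have "{ds \<in> digits k. y + digit_val prm 0 ds \<in> disc_plus_fracs a k}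
      = {ds \<in> digits k. av ((y - a - frac_part (y - a)) + digit_val prm 0 ds) \<le> qpow (- int k)}"
    by (auto simp: mem_disc_plus_fracs_iff algebra_simps)
  then show ?case using card_digits_approx frac_part(2) by simp
next
  case (Suc j)
  have "card {ds \<in> digits (Suc j + k). y + digit_val prm (- int (Suc j)) ds \<in> disc_plus_fracs a k}
      = (\<Sum>c\<in>C. card {ds \<in> digits (j + k).
          (y + c * prm powi (- int (Suc j))) + digit_val prm (- int j) ds \<in> disc_plus_fracs a k})"
    by (simp add: card_digits_Suc_filter algebra_simps)
  also have "\<dots> = q ^ Suc j" using Suc card_C by simp
  finally show ?case .
qed

lemma disc_translate: "av t \<le> r \<Longrightarrow> x + t \<in> disc av b r \<longleftrightarrow> x \<in> disc av b r"
  unfolding disc_def using av_add_le[of "x - b" r t] av_diff_le[of "x + t - b" r t]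
  by (auto simp: algebra_simps)

end

section \<open>Haar measure and dilation by beta\<close>

locale haar_local_field = local_field av q prm C
  for av :: "'a::field \<Rightarrow> real" and q prm C +
  fixes M :: "'a measure"
  assumes haar: "haar_measure av M"
begin

lemma
  shows space_M [simp]: "space M = UNIV"
    and sets_M: "sets M = sigma_sets UNIV {disc av a r | a r. True}"
    and emeasure_translate: "A \<in> sets M \<Longrightarrow> emeasure M ((+) a ` A) = emeasure M A"
    and emeasure_val_ring: "emeasure M (val_ring av) < \<infinity>"
  using haar unfolding haar_measure_def by auto

lemma disc_in_sets [measurable]: "disc av c r \<in> sets M"
  unfolding sets_M by (rule sigma_sets.Basic) blast

lemma translate_measurable: "(\<lambda>x. x + t) \<in> M \<rightarrow>\<^sub>M M"
proof (rule measurable_sigma_sets[OF sets_M])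
  fix A assume "A \<in> {disc av a r |a r. True}"
  then obtain c r where "A = disc av c r" by blast
  then have "(\<lambda>x. x + t) -` A \<inter> space M = disc av (c - t) r" by (auto simp: disc_def algebra_simps)
  then show "(\<lambda>x. x + t) -` A \<inter> space M \<in> sets M" by simp
qed auto

lemma distr_translate: "distr M M (\<lambda>x. x + t) = M"
proof (rule measure_eqI)
  fix A assume "A \<in> sets (distr M M (\<lambda>x. x + t))"
  then have A: "A \<in> sets M" by simp
  have "(\<lambda>x. x + t) -` A \<inter> space M = (+) (- t) ` A"
    by (auto simp: image_iff algebra_simps intro!: exI[of _ "_ + t"])
  then have "emeasure (distr M M (\<lambda>x. x + t)) A = emeasure M ((+) (- t) ` A)"
    by (simp only: emeasure_distr[OF translate_measurable A])
  then show "emeasure (distr M M (\<lambda>x. x + t)) A = emeasure M A"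
    by (simp only: emeasure_translate[OF A])
qed simp

lemma integrable_translate:
  fixes f :: "'a \<Rightarrow> 'b::{banach, second_countable_topology}"
  shows "integrable M f \<Longrightarrow> integrable M (\<lambda>x. f (x + t))"
  using integrable_distr_eq[OF translate_measurable, of f t] distr_translate by simp

lemma integral_translate:
  fixes f :: "'a \<Rightarrow> real"
  assumes "f \<in> borel_measurable M"
  shows "(\<integral>x. f (x + t) \<partial>M) = (\<integral>x. f x \<partial>M)"
  using integral_distr[OF translate_measurable assms, of t] distr_translate by simp

lemma integral_eq_average_translates:
  fixes F :: "'a \<Rightarrow> real"
  assumes "integrable M F" "finite L"
  shows "real (card L) * (\<integral>x. F x \<partial>M) = (\<integral>x. (\<Sum>i\<in>L. F (x + t i)) \<partial>M)"
  using assms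
  by (simp add: Bochner_Integration.integral_sum integrable_translate integral_translate borel_measurable_integrable)

lemma emeasure_disc_1: "emeasure M (disc av b 1) < \<infinity>"
proof -
  have "disc av b 1 = (+) b ` val_ring av"
    by (auto simp: disc_def val_ring_def image_iff intro!: exI[of _ "_ - b"])
  moreover have "val_ring av = disc av 0 1" by (simp add: val_ring_def disc_def)
  ultimately show ?thesis using emeasure_translate[of "val_ring av" b] emeasure_val_ring by simp
qed

end

locale haar_dilation = haar_local_field av q prm C M
  for av :: "'a::field \<Rightarrow> real" and q prm C M +
  fixes beta :: 'a
  assumes av_beta: "1 < av beta"
begin

lemma beta_nonzero: "beta \<noteq> 0"
  using av_beta by auto

definition beta_exp :: int where "beta_exp = (SOME s. av beta = qpow s)"

lemma av_beta_eq: "av beta = qpow beta_exp" and one_le_beta_exp: "1 \<le> beta_exp"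
proof -
  show *: "av beta = qpow beta_exp"
    unfolding beta_exp_def using av_value_qpow[OF beta_nonzero] by (rule someI_ex)
  show "1 \<le> beta_exp" using av_beta qpow_less_iff[of 0 beta_exp] by (simp add: *)
qed

lemma av_inverse_beta_power: "av (inverse beta ^ n) = qpow (- beta_exp * int n)"
  by (simp add: av_power av_inverse av_beta_eq qpow_power flip: qpow_uminus)

lemma preimage_disc_beta_power:
  "{x. beta ^ n * x \<in> disc av c r} = disc av (c / beta ^ n) (r / av beta ^ n)"
proof -
  have "beta ^ n * x - c = beta ^ n * (x - c / beta ^ n)" for x
    using beta_nonzero by (simp add: algebra_simps)
  then have "av (beta ^ n * x - c) = av beta ^ n * av (x - c / beta ^ n)" for x
    by (simp add: av_mult av_power)
  moreover have "0 < av beta ^ n" using av_beta by simp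
  ultimately show ?thesis unfolding disc_def by (auto simp: field_simps)
qed

lemma preimage_disc_plus_fracs_in_sets [measurable]:
  "{x. beta ^ n * x \<in> disc_plus_fracs a k} \<in> sets M"
proof -
  have "{x. beta ^ n * x \<in> disc_plus_fracs a k}
      = (\<Union>r\<in>fracs. {x. beta ^ n * x \<in> disc av (a + r) (qpow (- int k))})"
    unfolding disc_plus_fracs_eq_UN by auto
  also have "\<dots> \<in> sets M"
    unfolding preimage_disc_beta_power by (rule sets.countable_UN'') (auto intro: countable_fracs)
  finally show ?thesis .
qed

definition hit_excess :: "'a \<Rightarrow> nat \<Rightarrow> nat \<Rightarrow> 'a \<Rightarrow> real" where
  "hit_excess a k n x = indicator (disc_plus_fracs a k) (beta ^ n * x) - qpow (- int k)"

lemma hit_excess_measurable [measurable]: "hit_excess a k n \<in> borel_measurable M"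
proof -
  have "hit_excess a k n = (\<lambda>x. indicator {x. beta ^ n * x \<in> disc_plus_fracs a k} x - qpow (- int k))"
    by (auto simp: hit_excess_def indicator_def)
  then show ?thesis by simp
qed

lemma abs_hit_excess_le: "\<bar>hit_excess a k n x\<bar> \<le> 1"
  using qpow_le_1_iff[of "- int k"] qpow_pos[of "- int k"]
  unfolding hit_excess_def indicator_def by (auto simp del: qpow_le_1_iff)

lemma sum_hit_excess_digit_translates:
  assumes "av a \<le> 1"
  shows "(\<Sum>ds\<in>digits (j + k). hit_excess a k m (x + inverse beta ^ m * digit_val prm (- int j) ds)) = 0"
proof -
  have "beta ^ m * (x + inverse beta ^ m * d) = beta ^ m * x + d" for d
    using beta_nonzero by (simp add: field_simps power_inverse)
  then have "(\<Sum>ds\<in>digits (j + k). hit_excess a k m (x + inverse beta ^ m * digit_val prm (- int j) ds))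
      = real (card {ds \<in> digits (j + k). beta ^ m * x + digit_val prm (- int j) ds \<in> disc_plus_fracs a k})
        - real (card (digits (j + k))) * qpow (- int k)"
    using finite_digits by (simp add: hit_excess_def sum_subtractf indicator_def sum.If_cases Int_def)
  also have "\<dots> = 0"
    using card_digit_translates_in_disc_plus_fracs[OF assms] qpow_minus_of_nat_mult[of k]
    by (simp add: card_digits power_add algebra_simps)
  finally show ?thesis .
qed

lemma integral_hit_excess_orthogonal:
  assumes a: "av a \<le> 1" and "n + k \<le> m"
  shows "(\<integral>x. indicator (disc av b 1) x * hit_excess a k n x * hit_excess a k m x \<partial>M) = 0"
proof -
  have "int k \<le> (int m - int n) * beta_exp"
    using \<open>n + k \<le> m\<close> one_le_beta_exp mult_left_mono[of 1 beta_exp "int m - int n"] by simp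
  then obtain j where j: "int j = (int m - int n) * beta_exp - int k"
    by (metis diff_ge_0_iff_ge nonneg_int_cases)
  define L where "L = digits (j + k)"
  define t where "t ds = inverse beta ^ m * digit_val prm (- int j) ds" for ds
  define F where "F x = indicator (disc av b 1) x * hit_excess a k n x * hit_excess a k m x" for x
  have av_t: "av (beta ^ l * t ds) \<le> qpow (int j - beta_exp * int (m - l))" if "ds \<in> L" "l \<le> m" for ds l
  proof -
    have "beta ^ l * t ds = inverse beta ^ (m - l) * digit_val prm (- int j) ds"
      using beta_nonzero \<open>l \<le> m\<close> by (simp add: t_def power_inverse power_diff field_simps)
    then have "av (beta ^ l * t ds) = qpow (- beta_exp * int (m - l)) * av (digit_val prm (- int j) ds)"
      by (simp add: av_mult av_inverse_beta_power)
    also have "\<dots> \<le> qpow (- beta_exp * int (m - l)) * qpow (int j)"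
      using that av_digit_val_le[of ds "- int j"] by (intro mult_left_mono) (simp_all add: L_def digits_def)
    finally show ?thesis by (simp add: algebra_simps flip: qpow_add)
  qed
  have shift: "F (x + t ds) = indicator (disc av b 1) x * hit_excess a k n x * hit_excess a k m (x + t ds)"
    if "ds \<in> L" for x ds
  proof -
    have "av (t ds) \<le> qpow (- int k - int n * beta_exp)"
      using av_t[OF that, of 0] j by (simp add: algebra_simps)
    moreover have "0 \<le> int n * beta_exp" using one_le_beta_exp by simp
    ultimately have "av (t ds) \<le> 1" using qpow_le_1_iff[of "- int k - int n * beta_exp"] by linarith
    moreover have "av (beta ^ n * t ds) \<le> qpow (- int k)"
      using av_t[OF that, of n] j \<open>n + k \<le> m\<close> by (simp add: of_nat_diff algebra_simps)
    ultimately show ?thesis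
      using disc_translate[of "t ds" 1 x b] disc_plus_fracs_translate[of "beta ^ n * t ds" k "beta ^ n * x" a]
      by (simp add: F_def hit_excess_def indicator_def distrib_left)
  qed
  have "(\<Sum>ds\<in>L. F (x + t ds))
      = indicator (disc av b 1) x * hit_excess a k n x * (\<Sum>ds\<in>L. hit_excess a k m (x + t ds))" for x
    using shift by (simp add: sum_distrib_left)
  then have "(\<Sum>ds\<in>L. F (x + t ds)) = 0" for x
    using sum_hit_excess_digit_translates[OF a] by (simp add: L_def t_def)
  moreover have "integrable M F"
    using integrableI_bounded_set_indicator[OF disc_in_sets[of b 1] _ emeasure_disc_1[of b],
        of "\<lambda>x. hit_excess a k n x * hit_excess a k m x" 1]
    by (simp add: F_def[abs_def] abs_hit_excess_le abs_mult mult_le_one mult.assoc)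
  ultimately have "real (card L) * (\<integral>x. F x \<partial>M) = 0"
    using integral_eq_average_translates[of F L t] finite_digits by (simp add: L_def)
  moreover have "card L \<noteq> 0" using two_le_q by (simp add: L_def card_digits)
  ultimately show ?thesis by (simp add: F_def)
qed

lemma AE_disc_1_hit_frequency:
  assumes "av a \<le> 1"
  shows "AE x in M. x \<in> disc av b 1 \<longrightarrow>
    (\<lambda>N. real (card {n\<in>{1..N}. beta ^ n * x \<in> disc_plus_fracs a k}) / real N) \<longlonglongrightarrow> qpow (- int k)"
proof -
  have "AE x in M. x \<in> disc av b 1 \<longrightarrow> (\<lambda>N. (\<Sum>n\<in>{1..N}. hit_excess a k n x) / real N) \<longlonglongrightarrow> 0"
    by (rule AE_averages_tendsto_zero_of_quasi_orthogonal[where k = k, OF disc_in_sets emeasure_disc_1])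
      (simp_all add: hit_excess_measurable abs_hit_excess_le integral_hit_excess_orthogonal[OF assms])
  then show ?thesis
  proof (rule AE_mp, intro AE_I2 impI)
    fix x
    assume "x \<in> disc av b 1 \<longrightarrow> (\<lambda>N. (\<Sum>n\<in>{1..N}. hit_excess a k n x) / real N) \<longlonglongrightarrow> 0"
      and "x \<in> disc av b 1"
    then have "(\<lambda>N. (\<Sum>n\<in>{1..N}. hit_excess a k n x) / real N + qpow (- int k))
        \<longlonglongrightarrow> 0 + qpow (- int k)"
      by (intro tendsto_add) simp_all
    moreover have "(\<Sum>n\<in>{1..N}. hit_excess a k n x) / real N + qpow (- int k)
        = real (card {n\<in>{1..N}. beta ^ n * x \<in> disc_plus_fracs a k}) / real N" if "1 \<le> N" for N
      using that
      by (simp add: hit_excess_def sum_subtractf indicator_def sum.If_cases Int_def diff_divide_distrib)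
    then have "\<forall>\<^sub>F N in sequentially. (\<Sum>n\<in>{1..N}. hit_excess a k n x) / real N + qpow (- int k)
        = real (card {n\<in>{1..N}. beta ^ n * x \<in> disc_plus_fracs a k}) / real N"
      unfolding eventually_sequentially by blast
    ultimately show "(\<lambda>N. real (card {n\<in>{1..N}. beta ^ n * x \<in> disc_plus_fracs a k}) / real N)
        \<longlonglongrightarrow> qpow (- int k)"
      by (simp add: Lim_transform_eventually)
  qed
qed

lemma unif_distr_int_part_if_hit_frequencies:
  assumes freq: "\<And>k a. a \<in> digit_val prm 0 ` digits k \<Longrightarrow>
    (\<lambda>N. real (card {n\<in>{1..N}. beta ^ n * x \<in> disc_plus_fracs a k}) / real N) \<longlonglongrightarrow> qpow (- int k)"
  shows "unif_distr av q (\<lambda>n. int_part av prm C (beta ^ n * x))"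
  unfolding unif_distr_def
proof (intro conjI allI ballI)
  show "int_part av prm C (beta ^ n * x) \<in> val_ring av" for n
    using frac_part(2) by (simp add: int_part_eq val_ring_def)
next
  fix a k assume "a \<in> val_ring av"
  then have a: "av a \<le> 1" by (simp add: val_ring_def)
  then obtain ds where ds: "ds \<in> digits k" "av (a - digit_val prm 0 ds) \<le> qpow (- int k)"
    using exists_digit_val_approx[of a 0 k] by auto
  have "int_part av prm C z \<in> disc av a (real q powr (- real k))
      \<longleftrightarrow> z \<in> disc_plus_fracs (digit_val prm 0 ds) k" for z
    using int_part_in_disc_iff[OF a] disc_plus_fracs_cong[OF ds(2)] by (simp add: qpow_minus_of_nat)
  then show "(\<lambda>N. real (card {n\<in>{1..N}. int_part av prm C (beta ^ n * x)
        \<in> disc av a (real q powr (- real k))}) / real N) \<longlonglongrightarrow> real q powr (- real k)"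
    using freq[of "digit_val prm 0 ds" k] ds(1) by (simp add: qpow_minus_of_nat)
qed

theorem AE_unif_distr_int_part: "AE x in M. unif_distr av q (\<lambda>n. int_part av prm C (beta ^ n * x))"
proof -
  define freq where "freq a k x \<longleftrightarrow>
    (\<lambda>N. real (card {n\<in>{1..N}. beta ^ n * x \<in> disc_plus_fracs a k}) / real N) \<longlonglongrightarrow> qpow (- int k)"
    for a k x
  have "AE x in M. \<forall>k. \<forall>b\<in>fracs. \<forall>a\<in>digit_val prm 0 ` digits k. x \<in> disc av b 1 \<longrightarrow> freq a k x"
    unfolding AE_all_countable AE_ball_countable[OF countable_fracs]
  proof (intro allI ballI AE_ball_countable[THEN iffD2] countable_finite finite_imageI finite_digits)
    fix k a assume "a \<in> digit_val prm 0 ` digits k"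
    then have "av a \<le> 1" using av_digit_val_le[of _ 0] by (auto simp: digits_def)
    then show "AE x in M. x \<in> disc av b 1 \<longrightarrow> freq a k x" for b
      unfolding freq_def by (rule AE_disc_1_hit_frequency)
  qed
  then show ?thesis
  proof (rule AE_mp, intro AE_I2 impI allI)
    fix x assume "\<forall>k. \<forall>b\<in>fracs. \<forall>a\<in>digit_val prm 0 ` digits k. x \<in> disc av b 1 \<longrightarrow> freq a k x"
    moreover have "x \<in> disc av (frac_part x) 1" using frac_part(2) by (simp add: disc_def)
    ultimately show "unif_distr av q (\<lambda>n. int_part av prm C (beta ^ n * x))"
      using frac_part(1) by (intro unif_distr_int_part_if_hit_frequencies) (auto simp: freq_def)
  qed
qed

end

theorem corollary1p3:
  fixes av :: "'a::field \<Rightarrow> real" and q :: nat and prm beta :: 'a and C :: "'a set"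
    and M :: "'a measure"
  assumes "nonarch_local_field av q prm C"
    and "av beta > 1"
    and "haar_measure av M"
  shows "AE x in M. unif_distr av q (\<lambda>n. int_part av prm C (beta ^ n * x))"
proof -
  interpret haar_dilation av q prm C M beta
    using assms by unfold_locales
  show ?thesis by (rule AE_unif_distr_int_part)
qed

end
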